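(* Let $(G,k)$ be an instance of PITVD, let $S\subseteq V(G)$ be such that $G-S$ is a simple (prop-int, tree)-graph, and let $V_1$ be the set of vertices of the connected components of $G-S$ that contain a cycle. Let $\mathcal{B}$ be the bipartite graph with one side $S$ and the other side the set $\mathcal{C}$ of connected components of $G[V_1]$, where $s\in S$ is adjacent to $D\in\mathcal{C}$ iff $s$ has a neighbor in $D$ in $G$. Suppose $\widehat{S}\subseteq S$ and $\widehat{\mathcal{C}}\subseteq\mathcal{C}$ are non-empty sets such that (i) there is a $3$-expansion of $\widehat{S}$ into $\widehat{\mathcal{C}}$ in $\mathcal{B}$, and (ii) $N_{\mathcal{B}}(\widehat{\mathcal{C}})\subseteq\widehat{S}$. Then $(G,k)$ is a yes-instance of PITVD if and only if $(G-\widehat{S},k-|\widehat{S}|)$ is a yes-instance of PITVD.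
   Context: PITVD: the input is an undirected multigraph $G$ (no self-loops) and an integer $k$; the question is whether there exists $X\subseteq V(G)$ with $|X|\le k$ such that $G-X$ is a simple graph and every connected component of $G-X$ is a proper interval graph or a tree. A simple graph is a (prop-int, tree)-graph if each component is a proper interval graph or a tree. For a bipartite graph with sides $A,B$ and $\widehat{A}\subseteq A$, $\widehat{B}\subseteq B$, a set $M$ of edges is a $q$-expansion of $\widehat{A}$ into $\widehat{B}$ if every vertex of $\widehat{A}$ is incident to exactly $q$ edges of $M$ and exactly $q|\widehat{A}|$ vertices of $\widehat{B}$ are incident to edges of $M$. *)

theory Defs
  imports Complex_Main
begin

text \<open>An undirected multigraph without self-loops: a vertex set together with an
  edge-multiplicity function.\<close>
type_synonym 'a mgraph = "'a set \<times> ('a \<Rightarrow> 'a \<Rightarrow> nat)"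

definition verts :: "'a mgraph \<Rightarrow> 'a set" where "verts G = fst G"
definition mult :: "'a mgraph \<Rightarrow> 'a \<Rightarrow> 'a \<Rightarrow> nat" where "mult G = snd G"

definition multigraph :: "'a mgraph \<Rightarrow> bool" where
  "multigraph G \<longleftrightarrow> finite (verts G)
     \<and> (\<forall>u v. mult G u v = mult G v u)
     \<and> (\<forall>v. mult G v v = 0)
     \<and> (\<forall>u v. mult G u v > 0 \<longrightarrow> u \<in> verts G \<and> v \<in> verts G)"

definition adj :: "'a mgraph \<Rightarrow> 'a \<Rightarrow> 'a \<Rightarrow> bool" where
  "adj G u v \<longleftrightarrow> u \<in> verts G \<and> v \<in> verts G \<and> mult G u v > 0"

definition induced :: "'a mgraph \<Rightarrow> 'a set \<Rightarrow> 'a mgraph" where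
  "induced G X = (verts G \<inter> X, \<lambda>u v. if u \<in> X \<and> v \<in> X then mult G u v else 0)"

definition del_verts :: "'a mgraph \<Rightarrow> 'a set \<Rightarrow> 'a mgraph" where
  "del_verts G X = induced G (verts G - X)"

definition simple :: "'a mgraph \<Rightarrow> bool" where
  "simple G \<longleftrightarrow> (\<forall>u v. mult G u v \<le> 1)"

definition reach :: "'a mgraph \<Rightarrow> 'a \<Rightarrow> 'a \<Rightarrow> bool" where
  "reach G u v \<longleftrightarrow> u \<in> verts G \<and> (adj G)\<^sup>*\<^sup>* u v"

definition components :: "'a mgraph \<Rightarrow> 'a set set" where
  "components G = {{v. reach G u v} | u. u \<in> verts G}"

definition connected_graph :: "'a mgraph \<Rightarrow> bool" where
  "connected_graph G \<longleftrightarrow> verts G \<noteq> {} \<and> (\<forall>u\<in>verts G. \<forall>v\<in>verts G. reach G u v)"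

definition has_cycle :: "'a mgraph \<Rightarrow> bool" where
  "has_cycle G \<longleftrightarrow> (\<exists>xs. length xs \<ge> 3 \<and> distinct xs \<and> set xs \<subseteq> verts G
      \<and> (\<forall>i < length xs. adj G (xs ! i) (xs ! ((i + 1) mod length xs))))"

definition is_tree :: "'a mgraph \<Rightarrow> bool" where
  "is_tree G \<longleftrightarrow> connected_graph G \<and> \<not> has_cycle G"

definition proper_interval :: "'a mgraph \<Rightarrow> bool" where
  "proper_interval G \<longleftrightarrow> simple G \<and> (\<exists>l r :: 'a \<Rightarrow> real.
      (\<forall>v\<in>verts G. l v \<le> r v)
    \<and> (\<forall>u\<in>verts G. \<forall>v\<in>verts G. u \<noteq> v \<longrightarrow>
          (adj G u v \<longleftrightarrow> {l u..r u} \<inter> {l v..r v} \<noteq> {}))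
    \<and> (\<forall>u\<in>verts G. \<forall>v\<in>verts G. \<not> ({l v..r v} \<subset> {l u..r u})))"

definition pit_graph :: "'a mgraph \<Rightarrow> bool" where
  "pit_graph G \<longleftrightarrow> simple G \<and>
     (\<forall>C\<in>components G. proper_interval (induced G C) \<or> is_tree (induced G C))"

definition PITVD :: "'a mgraph \<Rightarrow> int \<Rightarrow> bool" where
  "PITVD G k \<longleftrightarrow> (\<exists>X \<subseteq> verts G. int (card X) \<le> k \<and> pit_graph (del_verts G X))"

definition q_expansion ::
  "('a \<Rightarrow> 'b \<Rightarrow> bool) \<Rightarrow> 'a set \<Rightarrow> 'b set \<Rightarrow> 'a set \<Rightarrow> 'b set \<Rightarrow> nat \<Rightarrow> ('a \<times> 'b) set \<Rightarrow> bool" where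
  "q_expansion E A B Ahat Bhat q M \<longleftrightarrow>
      M \<subseteq> {(a, b). a \<in> A \<and> b \<in> B \<and> E a b}
    \<and> (\<forall>a\<in>Ahat. card {e \<in> M. fst e = a} = q)
    \<and> card {b \<in> Bhat. \<exists>a. (a, b) \<in> M} = q * card Ahat"

end

theory Submission
  imports Defs "HOL-Library.Disjoint_Sets"
begin

(* Because N(Chat) \<subseteq> Shat, the 3|Shat| components of Chat touched by the expansion are all
   reached from Shat, so every s in Shat owns three of them and distinct vertices own disjoint
   triples.  These are components of G - S containing a cycle.  If a solution X keeps s but misses
   its three components, then in G - X the component of s contains a cycle, so it is a proper
   interval graph; yet s with one neighbour in each of the three components forms a claw, which
   proper interval graphs do not contain.  Charging every s in Shat - X to a vertex of X in its own
   components gives |Shat - X| <= |X \<inter> \<Union>Chat|, so Shat \<union> (X - \<Union>Chat) is no larger than X.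
   It is again a solution: after deleting Shat no edge leaves \<Union>Chat, which induces a subgraph of
   G - S, while the rest induces a subgraph of G - X, and (prop-int, tree)-graphs are closed under
   induced subgraphs. *)

section \<open>Induced subgraphs\<close>

lemma verts_induced [simp]: "verts (induced G A) = verts G \<inter> A"
  by (simp add: induced_def verts_def)

lemma mult_induced: "mult (induced G A) u v = (if u \<in> A \<and> v \<in> A then mult G u v else 0)"
  by (simp add: induced_def mult_def)

lemma adj_induced [simp]: "adj (induced G A) u v \<longleftrightarrow> u \<in> A \<and> v \<in> A \<and> adj G u v"
  by (auto simp: adj_def mult_induced)

lemma induced_induced: "induced (induced G A) B = induced G (A \<inter> B)"
  unfolding induced_def verts_def mult_def by (auto simp: fun_eq_iff)

lemma del_verts_del_verts: "del_verts (del_verts G A) B = del_verts G (A \<union> B)"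
  unfolding del_verts_def induced_induced by (rule arg_cong[where f = "induced G"]) auto

lemma induced_del_verts: "A \<subseteq> verts G - X \<Longrightarrow> induced (del_verts G X) A = induced G A"
  unfolding del_verts_def induced_induced by (simp add: Int_absorb1)

lemma adj_del_verts: "adj (del_verts G X) u v \<longleftrightarrow> u \<notin> X \<and> v \<notin> X \<and> adj G u v"
  unfolding del_verts_def adj_induced by (auto simp: adj_def)

lemma multigraph_induced: "multigraph G \<Longrightarrow> multigraph (induced G A)"
  unfolding multigraph_def by (auto simp: mult_induced finite_subset)

lemma multigraph_del_verts: "multigraph G \<Longrightarrow> multigraph (del_verts G X)"
  unfolding del_verts_def by (rule multigraph_induced)

lemma symp_adj: "multigraph G \<Longrightarrow> symp (adj G)"
  unfolding multigraph_def symp_def adj_def by auto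

lemma symp_adj_del_verts: "multigraph G \<Longrightarrow> symp (adj (del_verts G X))"
  by (rule symp_adj[OF multigraph_del_verts])

lemma simple_induced: "simple G \<Longrightarrow> simple (induced G A)"
  unfolding simple_def by (simp add: mult_induced)

section \<open>Reachability and components\<close>

lemma rtranclp_adj_in_verts: "(adj G)\<^sup>*\<^sup>* u v \<Longrightarrow> u \<in> verts G \<Longrightarrow> v \<in> verts G"
  by (induction rule: rtranclp_induct) (auto simp: adj_def)

lemma reach_in_verts: "reach G u v \<Longrightarrow> v \<in> verts G"
  by (meson rtranclp_adj_in_verts reach_def)

lemma reach_sym:
  assumes "symp (adj G)" "reach G u v"
  shows "reach G v u"
proof -
  have "(adj G)\<^sup>*\<^sup>* v u"
    using assms symp_rtranclp[OF assms(1)] by (auto simp: reach_def dest: sympD)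
  then show ?thesis using reach_in_verts[OF assms(2)] by (simp add: reach_def)
qed

lemma reach_trans: "reach G u v \<Longrightarrow> reach G v w \<Longrightarrow> reach G u w"
  unfolding reach_def using rtranclp_trans[of "adj G" u v w] by auto

lemma reach_induced: "reach (induced G A) u v \<Longrightarrow> reach G u v"
  unfolding reach_def by (auto elim: rtranclp_mono[THEN predicate2D, rotated])

definition adj_closed :: "'a mgraph \<Rightarrow> 'a set \<Rightarrow> bool" where
  "adj_closed G A \<longleftrightarrow> (\<forall>a w. a \<in> A \<longrightarrow> adj G a w \<longrightarrow> w \<in> A)"

lemma reach_induced_closed:
  assumes closed: "adj_closed G A" and "u \<in> A"
  shows "reach (induced G A) u v \<longleftrightarrow> reach G u v"
proof
  assume "reach G u v"
  then have "(adj G)\<^sup>*\<^sup>* u v" "u \<in> verts G" by (simp_all add: reach_def)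
  from this(1) have "v \<in> A \<and> (adj (induced G A))\<^sup>*\<^sup>* u v"
  proof (induction rule: rtranclp_induct)
    case (step y z)
    then have "z \<in> A" using closed unfolding adj_closed_def by blast
    with step have "adj (induced G A) y z" by simp
    with step \<open>z \<in> A\<close> show ?case by (meson rtranclp.rtrancl_into_rtrancl)
  qed (simp add: \<open>u \<in> A\<close>)
  then show "reach (induced G A) u v" using \<open>u \<in> verts G\<close> \<open>u \<in> A\<close> by (simp add: reach_def)
qed (rule reach_induced)

lemma component_subset_verts: "K \<in> components G \<Longrightarrow> K \<subseteq> verts G"
  by (auto simp: components_def intro: reach_in_verts)

lemma component_nonempty: "K \<in> components G \<Longrightarrow> K \<noteq> {}"
  by (auto simp: components_def reach_def)

lemma component_of: "u \<in> verts G \<Longrightarrow> {v. reach G u v} \<in> components G"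
  by (auto simp: components_def)

lemma component_reach_closed: "K \<in> components G \<Longrightarrow> u \<in> K \<Longrightarrow> reach G u v \<Longrightarrow> v \<in> K"
  by (auto simp: components_def intro: reach_trans)

lemma component_adj_closed: "K \<in> components G \<Longrightarrow> u \<in> K \<Longrightarrow> adj G u v \<Longrightarrow> v \<in> K"
  by (meson component_reach_closed adj_def r_into_rtranclp reach_def)

lemma adj_closed_component: "K \<in> components G \<Longrightarrow> adj_closed G K"
  unfolding adj_closed_def using component_adj_closed[of K G] by blast

lemma component_eq:
  assumes "symp (adj G)" "K \<in> components G" "u \<in> K"
  shows "K = {v. reach G u v}"
proof -
  obtain w where K: "K = {v. reach G w v}" using assms(2) by (auto simp: components_def)
  then have "reach G w u" using assms(3) by simp
  moreover have "reach G u w" using reach_sym[OF assms(1) \<open>reach G w u\<close>] .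
  ultimately show ?thesis unfolding K by (auto intro: reach_trans)
qed

lemma components_disjoint:
  "symp (adj G) \<Longrightarrow> K \<in> components G \<Longrightarrow> K' \<in> components G \<Longrightarrow> u \<in> K \<Longrightarrow> u \<in> K' \<Longrightarrow> K = K'"
  by (metis component_eq)

lemma connected_component:
  assumes "symp (adj G)" "K \<in> components G"
  shows "connected_graph (induced G K)"
proof -
  have "reach (induced G K) u v" if "u \<in> K" "v \<in> K" for u v
  proof -
    have "reach G u v" using component_eq[OF assms that(1)] that(2) by simp
    then show ?thesis
      using reach_induced_closed[OF adj_closed_component[OF assms(2)] that(1)] by simp
  qed
  then show ?thesis
    using component_nonempty[OF assms(2)] component_subset_verts[OF assms(2)]
    by (auto simp: connected_graph_def)
qed

lemma connected_subset_component:
  assumes "connected_graph (induced G A)" "A \<subseteq> verts G" "K \<in> components G" "u \<in> A" "u \<in> K"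
  shows "A \<subseteq> K"
proof
  fix v assume "v \<in> A"
  then have "reach (induced G A) u v"
    using assms(1,2,4) unfolding connected_graph_def by auto
  then show "v \<in> K" using component_reach_closed[OF assms(3,5) reach_induced] by blast
qed

lemma components_induced_Union:
  assumes "symp (adj G)" "\<K> \<subseteq> components G"
  shows "components (induced G (\<Union>\<K>)) = \<K>"
proof -
  have closed: "adj_closed G (\<Union>\<K>)"
    unfolding adj_closed_def
  proof (intro allI impI)
    fix a w assume "a \<in> \<Union>\<K>" "adj G a w"
    then obtain K where "K \<in> \<K>" "a \<in> K" by blast
    then show "w \<in> \<Union>\<K>" using component_adj_closed[of K G a w] assms(2) \<open>adj G a w\<close> by blast
  qed
  have component: "{v. reach (induced G (\<Union>\<K>)) u v} = K" if "K \<in> \<K>" "u \<in> K" for K u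
  proof -
    have "K \<in> components G" using that(1) assms(2) by blast
    then have "K = {v. reach G u v}" by (rule component_eq[OF assms(1) _ that(2)])
    moreover have "u \<in> \<Union>\<K>" using that by blast
    moreover have "reach (induced G (\<Union>\<K>)) u v \<longleftrightarrow> reach G u v" for v
      using closed \<open>u \<in> \<Union>\<K>\<close> by (rule reach_induced_closed)
    ultimately show ?thesis by simp
  qed
  show ?thesis
  proof
    show "components (induced G (\<Union>\<K>)) \<subseteq> \<K>"
      using component by (auto simp: components_def)
    show "\<K> \<subseteq> components (induced G (\<Union>\<K>))"
    proof
      fix K assume K: "K \<in> \<K>"
      then obtain u where "u \<in> K" using assms(2) component_nonempty by blast
      then have "u \<in> verts (induced G (\<Union>\<K>))"
        using K assms(2) component_subset_verts[of K G] by auto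
      then show "K \<in> components (induced G (\<Union>\<K>))"
        using component_of[of u "induced G (\<Union>\<K>)"] component[OF K \<open>u \<in> K\<close>] by simp
    qed
  qed
qed

lemma component_in_closed:
  assumes "adj_closed G A" "u \<in> verts G" "u \<in> A"
  shows "{v. reach G u v} \<in> components (induced G A)" "{v. reach G u v} \<subseteq> A"
proof -
  have eq: "{v. reach (induced G A) u v} = {v. reach G u v}"
    using reach_induced_closed[OF assms(1) \<open>u \<in> A\<close>] by simp
  show "{v. reach G u v} \<in> components (induced G A)"
    using component_of[of u "induced G A"] assms(2,3) eq by simp
  then show "{v. reach G u v} \<subseteq> A"
    using component_subset_verts by fastforce
qed

section \<open>Hereditary properties\<close>

lemma proper_interval_induced: "proper_interval G \<Longrightarrow> proper_interval (induced G A)"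
  unfolding proper_interval_def simple_def by (auto simp: mult_induced) blast

lemma has_cycle_induced_mono:
  assumes "has_cycle (induced G A)" "A \<subseteq> B"
  shows "has_cycle (induced G B)"
proof -
  obtain xs where "length xs \<ge> 3" "distinct xs" "set xs \<subseteq> verts G \<inter> A"
    "\<forall>i < length xs. adj (induced G A) (xs ! i) (xs ! ((i + 1) mod length xs))"
    using assms(1) unfolding has_cycle_def by auto
  then show ?thesis
    using assms(2) unfolding has_cycle_def by (intro exI[of _ xs]) auto
qed

lemma is_tree_induced_connected:
  "is_tree (induced G A) \<Longrightarrow> B \<subseteq> A \<Longrightarrow> connected_graph (induced G B) \<Longrightarrow> is_tree (induced G B)"
  using has_cycle_induced_mono unfolding is_tree_def by blast

lemma pit_graph_induced:
  assumes "symp (adj G)" "pit_graph G"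
  shows "pit_graph (induced G A)"
  unfolding pit_graph_def
proof (intro conjI ballI)
  show "simple (induced G A)" using assms(2) by (simp add: pit_graph_def simple_induced)
next
  fix K assume K: "K \<in> components (induced G A)"
  then obtain u where u: "u \<in> verts G" "u \<in> A" "K = {v. reach (induced G A) u v}"
    by (auto simp: components_def)
  define K' where "K' = {v. reach G u v}"
  have K': "K' \<in> components G" using u(1) by (simp add: K'_def component_of)
  have "K \<subseteq> K'" using u(3) reach_induced[of G A u] unfolding K'_def by blast
  moreover have "K \<subseteq> A" using component_subset_verts[OF K] by auto
  ultimately have same: "induced (induced G A) K = induced G K" "induced (induced G K') K = induced G K"
    by (simp_all add: induced_induced Int_absorb1)
  have "symp (adj (induced G A))" using assms(1) by (auto simp: symp_def)
  then have "connected_graph (induced G K)"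
    using connected_component[OF _ K] same(1) by simp
  moreover have "proper_interval (induced G K') \<or> is_tree (induced G K')"
    using assms(2) K' by (simp add: pit_graph_def)
  ultimately show "proper_interval (induced (induced G A) K) \<or> is_tree (induced (induced G A) K)"
    using proper_interval_induced[of "induced G K'" K] is_tree_induced_connected[of G K' K]
      \<open>K \<subseteq> K'\<close> same by auto
qed

lemma pit_graph_closed_split:
  assumes "multigraph G"
    and closed: "adj_closed G A"
    and pit_A: "pit_graph (induced G A)" and pit_B: "pit_graph (induced G (verts G - A))"
  shows "pit_graph G"
proof -
  have closed_C: "adj_closed G C" if "C \<in> {A, verts G - A}" for C
    using that closed symp_adj[OF assms(1)] by (auto simp: adj_closed_def adj_def dest: sympD)
  have pit_C: "pit_graph (induced G C)" if "C \<in> {A, verts G - A}" for C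
    using that pit_A pit_B by blast
  have simple: "mult G u v \<le> 1" if "adj G u v" "u \<in> C" "C \<in> {A, verts G - A}" for u v C
  proof -
    have "v \<in> C" using closed_C[OF that(3)] that(1,2) by (simp add: adj_closed_def)
    then have "mult (induced G C) u v = mult G u v" using that by (simp add: mult_induced)
    then show ?thesis using pit_C[OF that(3)] by (metis pit_graph_def simple_def)
  qed
  have good: "proper_interval (induced G K) \<or> is_tree (induced G K)"
    if "K = {v. reach G u v}" "u \<in> verts G" "u \<in> C" "C \<in> {A, verts G - A}" for u K C
  proof -
    have "K \<in> components (induced G C)" "K \<subseteq> C"
      using component_in_closed[OF closed_C[OF that(4)] that(2,3)] that(1) by auto
    moreover have "C \<inter> K = K" using \<open>K \<subseteq> C\<close> by blast
    ultimately show ?thesis using pit_C[OF that(4)] unfolding pit_graph_def induced_induced by metis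
  qed
  show ?thesis
    unfolding pit_graph_def
  proof (intro conjI ballI)
    show "simple G"
      unfolding simple_def
    proof (intro allI)
      fix u v
      show "mult G u v \<le> 1"
      proof (cases "adj G u v")
        case True
        then show ?thesis using simple[of u v A] simple[of u v "verts G - A"] by (auto simp: adj_def)
      next
        case False
        then have "mult G u v = 0" using assms(1) unfolding adj_def multigraph_def by (meson neq0_conv)
        then show ?thesis by simp
      qed
    qed
  next
    fix K assume "K \<in> components G"
    then obtain u where "u \<in> verts G" "K = {v. reach G u v}" by (auto simp: components_def)
    then show "proper_interval (induced G K) \<or> is_tree (induced G K)"
      using good[of K u A] good[of K u "verts G - A"] by auto
  qed
qed

section \<open>Claws and cyclic components\<close>

(* The middle one of the three disjoint intervals lies strictly between points of the outer two,
   and both of these meet [l s, r s]. *)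
lemma disjoint_intervals_meeting_psubset:
  fixes l r :: "'a \<Rightarrow> real"
  assumes lr: "l s \<le> r s" "l a \<le> r a" "l b \<le> r b" "l c \<le> r c"
    and "{l s..r s} \<inter> {l a..r a} \<noteq> {}" "{l s..r s} \<inter> {l b..r b} \<noteq> {}" "{l s..r s} \<inter> {l c..r c} \<noteq> {}"
    and "{l a..r a} \<inter> {l b..r b} = {}" "{l a..r a} \<inter> {l c..r c} = {}" "{l b..r b} \<inter> {l c..r c} = {}"
  shows "{l a..r a} \<subset> {l s..r s} \<or> {l b..r b} \<subset> {l s..r s} \<or> {l c..r c} \<subset> {l s..r s}"
proof -
  have disjoint: "{p..q} \<inter> {x..y} = {} \<longleftrightarrow> \<not> (p \<le> y \<and> x \<le> q)" if "p \<le> q" "x \<le> y" for p q x y :: real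
    using that by (auto simp: set_eq_iff) (metis nle_le)
  have psubset: "{p..q} \<subset> {x..y} \<longleftrightarrow> x \<le> p \<and> q \<le> y \<and> (x < p \<or> q < y)" if "p \<le> q" for p q x y :: real
    using that by (auto simp: atLeastatMost_psubset_iff)
  show ?thesis
    using assms unfolding disjoint[OF lr(1) lr(2)] disjoint[OF lr(1) lr(3)] disjoint[OF lr(1) lr(4)]
      disjoint[OF lr(2) lr(3)] disjoint[OF lr(2) lr(4)] disjoint[OF lr(3) lr(4)]
      psubset[OF lr(2)] psubset[OF lr(3)] psubset[OF lr(4)]
    by (smt (verit))
qed

lemma proper_interval_claw_free:
  assumes "proper_interval G" "{s, a, b, c} \<subseteq> verts G"
    and "adj G s a" "adj G s b" "adj G s c"
    and "\<not> adj G a b" "\<not> adj G a c" "\<not> adj G b c" "a \<noteq> b" "a \<noteq> c" "b \<noteq> c"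
  shows False
proof -
  obtain l r :: "'a \<Rightarrow> real" where
    lr: "\<forall>v\<in>verts G. l v \<le> r v" and
    adj_iff: "\<forall>u\<in>verts G. \<forall>v\<in>verts G. u \<noteq> v \<longrightarrow> (adj G u v \<longleftrightarrow> {l u..r u} \<inter> {l v..r v} \<noteq> {})" and
    proper: "\<forall>u\<in>verts G. \<forall>v\<in>verts G. \<not> {l v..r v} \<subset> {l u..r u}"
    using assms(1) unfolding proper_interval_def by blast
  have verts: "s \<in> verts G" "a \<in> verts G" "b \<in> verts G" "c \<in> verts G" using assms(2) by auto
  have adj_sym: "adj G v u" if "adj G u v" "u \<in> verts G" "v \<in> verts G" for u v
  proof (cases "u = v")
    case False
    then show ?thesis using that adj_iff[rule_format, of u v] adj_iff[rule_format, of v u] by (simp add: Int_commute)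
  qed (use that in simp)
  have "s \<noteq> a" "s \<noteq> b" "s \<noteq> c"
    using assms(3-8) adj_sym verts by metis+
  then have meets: "{l s..r s} \<inter> {l a..r a} \<noteq> {}" "{l s..r s} \<inter> {l b..r b} \<noteq> {}" "{l s..r s} \<inter> {l c..r c} \<noteq> {}"
    using adj_iff[rule_format, OF verts(1)] verts(2-4) assms(3-5) by simp_all
  have disjoint: "{l a..r a} \<inter> {l b..r b} = {}" "{l a..r a} \<inter> {l c..r c} = {}" "{l b..r b} \<inter> {l c..r c} = {}"
    using adj_iff[rule_format, of a b] adj_iff[rule_format, of a c] adj_iff[rule_format, of b c]
      verts assms(6-11) by simp_all
  show False
    using disjoint_intervals_meeting_psubset[OF lr[rule_format, OF verts(1)] lr[rule_format, OF verts(2)]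
        lr[rule_format, OF verts(3)] lr[rule_format, OF verts(4)] meets disjoint]
      proper[rule_format, OF verts(1)] verts by blast
qed

definition cyclic_components :: "'a mgraph \<Rightarrow> 'a set set" where
  "cyclic_components G = {K \<in> components G. has_cycle (induced G K)}"

lemma proper_interval_cyclic_component:
  "pit_graph G \<Longrightarrow> K \<in> cyclic_components G \<Longrightarrow> proper_interval (induced G K)"
  unfolding pit_graph_def cyclic_components_def is_tree_def by blast

lemma cyclic_component_claw_free:
  assumes "pit_graph G" "K \<in> cyclic_components G" "{s, a, b, c} \<subseteq> K"
    and "adj G s a" "adj G s b" "adj G s c"
    and "\<not> adj G a b" "\<not> adj G a c" "\<not> adj G b c" "a \<noteq> b" "a \<noteq> c" "b \<noteq> c"
  shows False
proof -
  have "K \<subseteq> verts G"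
    using assms(2) component_subset_verts[of K G] by (simp add: cyclic_components_def)
  then have verts: "{s, a, b, c} \<subseteq> verts (induced G K)" using assms(3) by auto
  have "adj (induced G K) s a" "adj (induced G K) s b" "adj (induced G K) s c"
    "\<not> adj (induced G K) a b" "\<not> adj (induced G K) a c" "\<not> adj (induced G K) b c"
    using assms(3-9) by auto
  then show False
    using proper_interval_claw_free[OF proper_interval_cyclic_component[OF assms(1,2)] verts]
      assms(10-12) by blast
qed

lemma component_del_verts:
  assumes "multigraph G" "D \<in> components (del_verts G S)"
  shows "D \<subseteq> verts G - S" "connected_graph (induced G D)"
proof -
  show sub: "D \<subseteq> verts G - S"
    using component_subset_verts[OF assms(2)] by (auto simp: del_verts_def)
  show "connected_graph (induced G D)"
    using connected_component[OF symp_adj_del_verts[OF assms(1)] assms(2)]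
      induced_del_verts[OF sub] by simp
qed

lemma components_del_verts_nonadjacent:
  assumes "multigraph G" "D \<in> components (del_verts G S)" "D' \<in> components (del_verts G S)"
    and "D \<noteq> D'" "d \<in> D" "d' \<in> D'"
  shows "\<not> adj G d d'" "d \<noteq> d'"
proof -
  have "d' \<notin> D"
    using components_disjoint[OF symp_adj_del_verts[OF assms(1)] assms(2,3) _ assms(6)] assms(4) by blast
  then show "d \<noteq> d'" using assms(5) by blast
  show "\<not> adj G d d'"
  proof
    assume "adj G d d'"
    then have "adj (del_verts G S) d d'"
      using component_del_verts(1)[OF assms(1)] assms(2,3,5,6) by (auto simp: del_verts_def)
    then show False using component_adj_closed[OF assms(2,5)] \<open>d' \<notin> D\<close> by blast
  qed
qed

lemma cyclic_component_through_neighbour: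
  assumes "multigraph G" "D \<in> cyclic_components (del_verts G S)" "D \<inter> X = {}"
    and "d \<in> D" "adj G s d" "s \<notin> X"
  shows "{v. reach (del_verts G X) s v} \<in> cyclic_components (del_verts G X)"
    and "D \<subseteq> {v. reach (del_verts G X) s v}"
proof -
  define H where "H = del_verts G X"
  define K where "K = {v. reach H s v}"
  have D: "D \<in> components (del_verts G S)" "has_cycle (induced (del_verts G S) D)"
    using assms(2) by (auto simp: cyclic_components_def)
  have DS: "D \<subseteq> verts G - S" and conn: "connected_graph (induced G D)"
    using component_del_verts[OF assms(1) D(1)] by auto
  have DX: "D \<subseteq> verts G - X" using DS assms(3) by blast
  have "adj H s d" using assms(3-6) by (auto simp: H_def adj_del_verts)
  then have "s \<in> verts H" "d \<in> K" by (auto simp: K_def reach_def adj_def)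
  then have K: "K \<in> components H" by (simp add: K_def component_of)
  have "D \<subseteq> K"
  proof (rule connected_subset_component[OF _ _ K assms(4) \<open>d \<in> K\<close>])
    show "connected_graph (induced H D)" using conn DX by (simp add: H_def induced_del_verts)
    show "D \<subseteq> verts H" using DX by (auto simp: H_def del_verts_def)
  qed
  moreover have "has_cycle (induced H D)"
    using D(2) DS DX by (simp add: H_def induced_del_verts)
  ultimately have "has_cycle (induced H K)" by (rule has_cycle_induced_mono[rotated])
  with K \<open>D \<subseteq> K\<close> show "K \<in> cyclic_components H" "D \<subseteq> K"
    by (simp_all add: cyclic_components_def)
qed

lemma pit_graph_del_verts_meets_attached_cyclic_component:
  assumes "multigraph G" "pit_graph (del_verts G X)" "s \<notin> X"
    and "\<D> \<subseteq> cyclic_components (del_verts G S)" "card \<D> = 3"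
    and "\<forall>D\<in>\<D>. \<exists>d\<in>D. adj G s d"
  shows "\<exists>D\<in>\<D>. D \<inter> X \<noteq> {}"
proof (rule ccontr)
  assume none: "\<not> ?thesis"
  define H where "H = del_verts G X"
  define K where "K = {v. reach H s v}"
  obtain D1 D2 D3 where D: "\<D> = {D1, D2, D3}" "D1 \<noteq> D2" "D1 \<noteq> D3" "D2 \<noteq> D3"
    using assms(5) unfolding card_3_iff by blast
  have "\<exists>d\<in>D1. adj G s d" "\<exists>d\<in>D2. adj G s d" "\<exists>d\<in>D3. adj G s d"
    using assms(6) unfolding D(1) by simp_all
  then obtain d1 d2 d3 where d: "d1 \<in> D1" "d2 \<in> D2" "d3 \<in> D3" "adj G s d1" "adj G s d2" "adj G s d3"
    by blast
  have cyclic: "D1 \<in> cyclic_components (del_verts G S)" "D2 \<in> cyclic_components (del_verts G S)"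
      "D3 \<in> cyclic_components (del_verts G S)"
    using assms(4) unfolding D(1) by simp_all
  note through = cyclic_component_through_neighbour[OF assms(1) _ _ _ _ assms(3), folded H_def]
  have avoid_X: "D1 \<inter> X = {}" "D2 \<inter> X = {}" "D3 \<inter> X = {}" using none unfolding D(1) by simp_all
  have K: "K \<in> cyclic_components H" "D1 \<subseteq> K" "D2 \<subseteq> K" "D3 \<subseteq> K"
    using through[OF cyclic(1) avoid_X(1) d(1,4)] through[OF cyclic(2) avoid_X(2) d(2,5)]
      through[OF cyclic(3) avoid_X(3) d(3,6)] by (simp_all add: K_def)
  have adj_H: "adj H s d1" "adj H s d2" "adj H s d3"
    using d avoid_X assms(3) by (auto simp: H_def adj_del_verts)
  then have "s \<in> K" by (auto simp: K_def reach_def adj_def)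
  have components: "D1 \<in> components (del_verts G S)" "D2 \<in> components (del_verts G S)"
      "D3 \<in> components (del_verts G S)"
    using cyclic by (simp_all add: cyclic_components_def)
  note nonadjacent = components_del_verts_nonadjacent[OF assms(1)]
  have "\<not> adj G d1 d2" "\<not> adj G d1 d3" "\<not> adj G d2 d3" "d1 \<noteq> d2" "d1 \<noteq> d3" "d2 \<noteq> d3"
    using nonadjacent[OF components(1,2) D(2) d(1,2)] nonadjacent[OF components(1,3) D(3) d(1,3)]
      nonadjacent[OF components(2,3) D(4) d(2,3)] by auto
  then have nonadj_H: "\<not> adj H d1 d2" "\<not> adj H d1 d3" "\<not> adj H d2 d3"
    and distinct: "d1 \<noteq> d2" "d1 \<noteq> d3" "d2 \<noteq> d3"
    by (auto simp: H_def adj_del_verts)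
  have "{s, d1, d2, d3} \<subseteq> K" using \<open>s \<in> K\<close> K(2-4) d(1-3) by auto
  with assms(2) K(1) show False
    unfolding H_def[symmetric] by (rule cyclic_component_claw_free[OF _ _ _ adj_H nonadj_H distinct])
qed

section \<open>Expansions\<close>

lemma q_expansion_bij_betw_snd:
  assumes "q_expansion E A B Ahat Bhat q M" "finite M" "finite Ahat"
    and into_Ahat: "\<And>a b. (a, b) \<in> M \<Longrightarrow> b \<in> Bhat \<Longrightarrow> a \<in> Ahat"
  shows "bij_betw snd {e \<in> M. fst e \<in> Ahat} {b \<in> Bhat. \<exists>a. (a, b) \<in> M}"
proof -
  define M' where "M' = {e \<in> M. fst e \<in> Ahat}"
  define B' where "B' = {b \<in> Bhat. \<exists>a. (a, b) \<in> M}"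
  have "finite M'" using assms(2) by (simp add: M'_def)
  have "card M' = (\<Sum>a\<in>Ahat. card {e \<in> M. fst e = a})"
  proof -
    have "M' = (\<Union>a\<in>Ahat. {e \<in> M. fst e = a})" by (auto simp: M'_def)
    then show ?thesis by (simp only:) (rule card_UN_disjoint, use assms(2,3) in auto)
  qed
  also have "\<dots> = q * card Ahat" using assms(1) by (simp add: q_expansion_def)
  also have "\<dots> = card B'" using assms(1) by (simp add: q_expansion_def B'_def)
  finally have card_eq: "card M' = card B'" .
  have "B' \<subseteq> snd ` M'" using into_Ahat by (force simp: B'_def M'_def)
  then have "card B' \<le> card (snd ` M')" using \<open>finite M'\<close> by (simp add: card_mono)
  moreover have "card (snd ` M') \<le> card M'" using \<open>finite M'\<close> by (rule card_image_le)
  ultimately have "card (snd ` M') = card M'" "card B' = card (snd ` M')" using card_eq by linarith+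
  then have "inj_on snd M'" "B' = snd ` M'"
    using \<open>finite M'\<close> \<open>B' \<subseteq> snd ` M'\<close> by (simp_all add: eq_card_imp_inj_on card_subset_eq)
  then show ?thesis by (simp add: bij_betw_def M'_def B'_def)
qed

lemma card_le_card_if_disjoint_family_meets:
  assumes "finite Y" "disjoint_family_on F A" "\<And>a. a \<in> A \<Longrightarrow> F a \<inter> Y \<noteq> {}"
  shows "card A \<le> card Y"
proof -
  define f where "f a = (SOME y. y \<in> F a \<inter> Y)" for a
  have f: "f a \<in> F a \<inter> Y" if "a \<in> A" for a
    using assms(3)[OF that] unfolding f_def by (meson all_not_in_conv someI_ex)
  have "inj_on f A"
  proof (rule inj_onI)
    fix a b assume "a \<in> A" "b \<in> A" "f a = f b"
    then have "F a \<inter> F b \<noteq> {}" using f[OF \<open>a \<in> A\<close>] f[OF \<open>b \<in> A\<close>] by auto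
    then show "a = b" using assms(2) \<open>a \<in> A\<close> \<open>b \<in> A\<close> unfolding disjoint_family_on_def by blast
  qed
  moreover have "f ` A \<subseteq> Y" using f by blast
  ultimately show ?thesis using assms(1) by (rule card_inj_on_le)
qed

section \<open>The reduction\<close>

locale pitvd_expansion =
  fixes G :: "'a mgraph" and S Shat :: "'a set" and Chat :: "'a set set"
    and E :: "'a \<Rightarrow> 'a set \<Rightarrow> bool" and M :: "('a \<times> 'a set) set"
  assumes multigraph: "multigraph G"
    and S_verts: "S \<subseteq> verts G"
    and pit_del_S: "pit_graph (del_verts G S)"
    and Shat_S: "Shat \<subseteq> S"
    and Chat_cyclic: "Chat \<subseteq> cyclic_components (del_verts G S)"
    and expansion: "q_expansion E S (cyclic_components (del_verts G S)) Shat Chat 3 M"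
    and E_adj: "\<And>s D. E s D \<Longrightarrow> \<exists>d\<in>D. adj G s d"
    and Chat_neighbours: "\<And>s D d. s \<in> S \<Longrightarrow> D \<in> Chat \<Longrightarrow> d \<in> D \<Longrightarrow> adj G s d \<Longrightarrow> s \<in> Shat"
begin

lemma finite_Shat: "finite Shat"
  using multigraph S_verts Shat_S by (meson finite_subset multigraph_def)

lemma Chat_components: "D \<in> Chat \<Longrightarrow> D \<in> components (del_verts G S)"
  using Chat_cyclic by (auto simp: cyclic_components_def)

lemma Chat_subset: "D \<in> Chat \<Longrightarrow> D \<subseteq> verts G - S"
  using component_del_verts(1)[OF multigraph Chat_components] .

lemma Chat_neighbour_outside_Shat:
  assumes "D \<in> Chat" "d \<in> D" "adj G d v" "v \<notin> Shat"
  shows "v \<in> D"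
proof (cases "v \<in> S")
  case True
  have "adj G v d" using assms(3) symp_adj[OF multigraph] by (simp add: sympD)
  then show ?thesis using Chat_neighbours[OF True assms(1,2)] assms(4) by blast
next
  case False
  then have "adj (del_verts G S) d v"
    using assms(1-3) Chat_subset by (auto simp: adj_del_verts)
  then show ?thesis using component_adj_closed[OF Chat_components[OF assms(1)] assms(2)] by blast
qed

lemma expansion_edge:
  assumes "(s, D) \<in> M"
  shows "s \<in> S" "D \<in> cyclic_components (del_verts G S)" "\<exists>d\<in>D. adj G s d"
  using assms expansion E_adj by (auto simp: q_expansion_def)

lemma finite_M: "finite M"
proof (rule finite_subset)
  show "M \<subseteq> S \<times> Pow (verts G)"
    using expansion_edge component_subset_verts[of _ "del_verts G S"]
    by (fastforce simp: cyclic_components_def del_verts_def)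
  show "finite (S \<times> Pow (verts G))"
    using multigraph S_verts by (simp add: multigraph_def finite_subset)
qed

lemma partners_bij: "bij_betw snd {e \<in> M. fst e \<in> Shat} {D \<in> Chat. \<exists>s. (s, D) \<in> M}"
  using q_expansion_bij_betw_snd[OF expansion finite_M finite_Shat] expansion_edge Chat_neighbours
  by blast

lemma partner_in_Chat: "(s, D) \<in> M \<Longrightarrow> s \<in> Shat \<Longrightarrow> D \<in> Chat"
  using partners_bij unfolding bij_betw_def by force

lemma partner_unique: "(s, D) \<in> M \<Longrightarrow> (s', D) \<in> M \<Longrightarrow> s \<in> Shat \<Longrightarrow> s' \<in> Shat \<Longrightarrow> s = s'"
  using partners_bij unfolding bij_betw_def inj_on_def by force

lemma card_partners:
  assumes "s \<in> Shat"
  shows "card {D. (s, D) \<in> M} = 3"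
proof -
  have "inj_on snd {e \<in> M. fst e = s}"
    using partners_bij assms unfolding bij_betw_def by (rule_tac inj_on_subset) auto
  moreover have "{D. (s, D) \<in> M} = snd ` {e \<in> M. fst e = s}" by force
  ultimately have "card {D. (s, D) \<in> M} = card {e \<in> M. fst e = s}" by (simp add: card_image)
  also have "\<dots> = 3" using expansion assms by (simp add: q_expansion_def)
  finally show ?thesis .
qed

lemma solution_meets_partner:
  assumes "pit_graph (del_verts G X)" "s \<in> Shat" "s \<notin> X"
  shows "\<exists>D. (s, D) \<in> M \<and> D \<inter> X \<noteq> {}"
proof -
  have "\<exists>D\<in>{D. (s, D) \<in> M}. D \<inter> X \<noteq> {}"
  proof (rule pit_graph_del_verts_meets_attached_cyclic_component[OF multigraph assms(1,3)])
    show "{D. (s, D) \<in> M} \<subseteq> cyclic_components (del_verts G S)" using expansion_edge(2) by blast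
    show "card {D. (s, D) \<in> M} = 3" using card_partners[OF assms(2)] .
    show "\<forall>D\<in>{D. (s, D) \<in> M}. \<exists>d\<in>D. adj G s d" using expansion_edge(3) by blast
  qed
  then show ?thesis by blast
qed

lemma card_Shat_diff_le:
  assumes "X \<subseteq> verts G" "pit_graph (del_verts G X)"
  shows "card (Shat - X) \<le> card (X \<inter> \<Union>Chat)"
proof (rule card_le_card_if_disjoint_family_meets)
  show "finite (X \<inter> \<Union>Chat)" using assms(1) multigraph by (meson finite_Int finite_subset multigraph_def)
  show "disjoint_family_on (\<lambda>s. \<Union>{D. (s, D) \<in> M}) (Shat - X)"
    unfolding disjoint_family_on_def
  proof (intro ballI impI)
    fix s s' assume "s \<in> Shat - X" "s' \<in> Shat - X" "s \<noteq> s'"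
    show "\<Union>{D. (s, D) \<in> M} \<inter> \<Union>{D. (s', D) \<in> M} = {}"
    proof (rule ccontr)
      assume "\<not> ?thesis"
      then obtain x D D' where "(s, D) \<in> M" "(s', D') \<in> M" "x \<in> D" "x \<in> D'" by blast
      have "D \<in> components (del_verts G S)" "D' \<in> components (del_verts G S)"
        using expansion_edge(2)[OF \<open>(s, D) \<in> M\<close>] expansion_edge(2)[OF \<open>(s', D') \<in> M\<close>]
        by (simp_all add: cyclic_components_def)
      then have "D = D'" using components_disjoint[OF symp_adj_del_verts[OF multigraph]] \<open>x \<in> D\<close> \<open>x \<in> D'\<close>
        by metis
      then show False
        using partner_unique \<open>(s, D) \<in> M\<close> \<open>(s', D') \<in> M\<close> \<open>s \<in> Shat - X\<close> \<open>s' \<in> Shat - X\<close> \<open>s \<noteq> s'\<close>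
        by blast
    qed
  qed
  fix s assume "s \<in> Shat - X"
  then obtain D where "(s, D) \<in> M" "D \<inter> X \<noteq> {}" using solution_meets_partner[OF assms(2)] by blast
  moreover have "D \<in> Chat" using partner_in_Chat \<open>(s, D) \<in> M\<close> \<open>s \<in> Shat - X\<close> by blast
  ultimately show "\<Union>{D. (s, D) \<in> M} \<inter> (X \<inter> \<Union>Chat) \<noteq> {}" by blast
qed

lemma pit_graph_del_verts_exchange:
  assumes "pit_graph (del_verts G X)"
  shows "pit_graph (del_verts G (Shat \<union> (X - \<Union>Chat)))"
proof -
  define Y where "Y = Shat \<union> (X - \<Union>Chat)"
  define H where "H = del_verts G Y"
  have Chat_Y: "\<Union>Chat \<subseteq> verts G - Y" and Chat_S: "\<Union>Chat \<subseteq> verts G - S"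
    using Chat_subset Shat_S by (auto simp: Y_def)
  have rest_X: "verts H - \<Union>Chat \<subseteq> verts G - X" and rest_Y: "verts H - \<Union>Chat \<subseteq> verts G - Y"
    by (auto simp: H_def Y_def del_verts_def)
  have "pit_graph H"
  proof (rule pit_graph_closed_split[where A = "\<Union>Chat"])
    show "multigraph H" unfolding H_def by (rule multigraph_del_verts[OF multigraph])
    show "adj_closed H (\<Union>Chat)"
      unfolding adj_closed_def H_def adj_del_verts Y_def using Chat_neighbour_outside_Shat by blast
    have "induced H (\<Union>Chat) = induced (del_verts G S) (\<Union>Chat)"
      using Chat_Y Chat_S by (simp add: H_def induced_del_verts)
    then show "pit_graph (induced H (\<Union>Chat))"
      using pit_graph_induced[OF symp_adj_del_verts[OF multigraph] pit_del_S] by simp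
    have "induced H (verts H - \<Union>Chat) = induced (del_verts G X) (verts H - \<Union>Chat)"
      using rest_X rest_Y by (simp add: H_def induced_del_verts)
    then show "pit_graph (induced H (verts H - \<Union>Chat))"
      using pit_graph_induced[OF symp_adj_del_verts[OF multigraph] assms] by simp
  qed
  then show ?thesis by (simp add: H_def Y_def)
qed

theorem PITVD_iff: "PITVD G k \<longleftrightarrow> PITVD (del_verts G Shat) (k - int (card Shat))"
proof
  assume "PITVD G k"
  then obtain X where X: "X \<subseteq> verts G" "int (card X) \<le> k" "pit_graph (del_verts G X)"
    unfolding PITVD_def by blast
  define X' where "X' = X - \<Union>Chat - Shat"
  have "finite X" using X(1) multigraph by (meson finite_subset multigraph_def)
  have "\<Union>Chat \<inter> Shat = {}" using Chat_subset Shat_S by blast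
  have "card X = card (X \<inter> (\<Union>Chat \<union> Shat)) + card X'"
    using card_Int_Diff[OF \<open>finite X\<close>, of "\<Union>Chat \<union> Shat"] by (simp add: X'_def Diff_eq Int_assoc)
  also have "card (X \<inter> (\<Union>Chat \<union> Shat)) = card (X \<inter> \<Union>Chat) + card (X \<inter> Shat)"
    using card_Un_disjoint[of "X \<inter> \<Union>Chat" "X \<inter> Shat"] \<open>finite X\<close> \<open>\<Union>Chat \<inter> Shat = {}\<close>
    by (simp add: Int_Un_distrib Int_assoc inf.left_commute[of "\<Union>Chat"])
  finally have "card X = card (X \<inter> \<Union>Chat) + card (X \<inter> Shat) + card X'" .
  moreover have "card Shat = card (Shat - X) + card (X \<inter> Shat)"
    using card_Int_Diff[OF finite_Shat, of X] by (simp add: Int_commute)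
  ultimately have "int (card X') \<le> k - int (card Shat)"
    using card_Shat_diff_le[OF X(1,3)] X(2) by linarith
  moreover have "X' \<subseteq> verts (del_verts G Shat)" using X(1) by (auto simp: X'_def del_verts_def)
  moreover have "del_verts (del_verts G Shat) X' = del_verts G (Shat \<union> (X - \<Union>Chat))"
    unfolding del_verts_del_verts X'_def by (metis Un_Diff_cancel)
  ultimately show "PITVD (del_verts G Shat) (k - int (card Shat))"
    unfolding PITVD_def using pit_graph_del_verts_exchange[OF X(3)] by auto
next
  assume "PITVD (del_verts G Shat) (k - int (card Shat))"
  then obtain X' where X': "X' \<subseteq> verts (del_verts G Shat)" "int (card X') \<le> k - int (card Shat)"
      "pit_graph (del_verts (del_verts G Shat) X')"
    unfolding PITVD_def by blast
  have "Shat \<union> X' \<subseteq> verts G" using X'(1) Shat_S S_verts by (auto simp: del_verts_def)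
  moreover have "int (card (Shat \<union> X')) \<le> k" using card_Un_le[of Shat X'] X'(2) by linarith
  moreover have "pit_graph (del_verts G (Shat \<union> X'))" using X'(3) by (simp add: del_verts_del_verts)
  ultimately show "PITVD G k" unfolding PITVD_def by blast
qed

end

theorem lemma33:
  fixes G :: "'a mgraph" and k :: int and S Shat :: "'a set"
    and V1 :: "'a set" and Cs Chat :: "'a set set"
    and adjB :: "'a \<Rightarrow> 'a set \<Rightarrow> bool"
  assumes "multigraph G"
    and "S \<subseteq> verts G"
    and "pit_graph (del_verts G S)"
    and "V1 = \<Union>{C \<in> components (del_verts G S). has_cycle (induced (del_verts G S) C)}"
    and "Cs = components (induced G V1)"
    and "adjB = (\<lambda>s D. s \<in> S \<and> D \<in> Cs \<and> (\<exists>d\<in>D. adj G s d))"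
    and "Shat \<subseteq> S" and "Chat \<subseteq> Cs" and "Shat \<noteq> {}" and "Chat \<noteq> {}"
    and "\<exists>M. q_expansion adjB S Cs Shat Chat 3 M"
    and "{s \<in> S. \<exists>D\<in>Chat. adjB s D} \<subseteq> Shat"
  shows "PITVD G k \<longleftrightarrow> PITVD (del_verts G Shat) (k - int (card Shat))"
proof -
  have "V1 \<subseteq> verts G - S"
    using component_subset_verts[of _ "del_verts G S"] assms(4) by (auto simp: del_verts_def)
  then have "induced G V1 = induced (del_verts G S) (\<Union>(cyclic_components (del_verts G S)))"
    using assms(4) by (simp add: induced_del_verts cyclic_components_def)
  then have Cs: "Cs = cyclic_components (del_verts G S)"
    using components_induced_Union[OF symp_adj_del_verts[OF assms(1)]] assms(5)
    by (simp add: cyclic_components_def)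
  obtain M where M: "q_expansion adjB S Cs Shat Chat 3 M" using assms(11) by blast
  have Chat_neighbours: "s \<in> Shat" if "s \<in> S" "D \<in> Chat" "d \<in> D" "adj G s d" for s D d
    using assms(6,8,12) that by blast
  interpret pitvd_expansion G S Shat Chat adjB M
    using assms(1-3,7,8) M Chat_neighbours unfolding Cs by unfold_locales (auto simp: assms(6))
  show ?thesis by (rule PITVD_iff)
qed

end
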